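(* Let $p\ge 2$ and let $\Theta$ be a $p\times p$ correlation matrix (real symmetric positive semi-definite with unit diagonal). For $\alpha\in(0,\infty)^p$ define the $p\times p$ matrix $g(\Theta,\alpha)$ by $g_{ij}(\Theta,\alpha)=\Theta_{ij}\alpha_i\alpha_j$ for $i\neq j$ and $g_{ii}(\Theta,\alpha)=1$. Let $e^{(1)},\dots,e^{(p)}$ be the standard basis vectors of $\mathbb{R}^p$, let $\tilde m$ be the number of pairs $1\le i<j\le p$ with $\Theta_{ij}\neq 0$, and let $A$ be the $\tilde m\times p$ matrix whose rows are the vectors $e^{(i)}+e^{(j)}$ (as row vectors), one for each pair $i<j$ with $\Theta_{ij}\neq 0$. If $A$ has rank $p$, then the model is identifiable at $\Theta$: for any $\alpha,\beta\in(0,\infty)^p$ and any $p\times p$ correlation matrix $\Theta'$, if $\Theta'=\Theta$ and $g(\Theta',\beta)=g(\Theta,\alpha)$, then $\alpha=\beta$. Equivalently, the map $(\Theta,\alpha)\mapsto(\Theta,g(\Theta,\alpha))$ is injective in $\alpha\in(0,\infty)^p$ for every such $\Theta$.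
   Context: In the two-population model, one population of correlation matrices has expected value $\Theta$ and the other has expected value $g(\Theta,\alpha)$ (the multiplicative link function); identifiability means the pair of expected values $(\Theta, g(\Theta,\alpha))$ determines $(\Theta,\alpha)$. *)

theory Defs
  imports "HOL-Analysis.Analysis"
begin

definition correlation_matrix :: "real^'p^'p \<Rightarrow> bool" where
  "correlation_matrix T \<longleftrightarrow>
     transpose T = T \<and> (\<forall>x. 0 \<le> x \<bullet> (T *v x)) \<and> (\<forall>i. T $ i $ i = 1)"

definition link_g :: "real^'p^'p \<Rightarrow> real^'p \<Rightarrow> real^'p^'p" where
  "link_g T a = (\<chi> i j. if i = j then 1 else T $ i $ j * a $ i * a $ j)"

text \<open>The set of rows e^(i) + e^(j) (i < j, Theta_ij \<noteq> 0) of the matrix A.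
  The rank of A (= its row rank, cf. row_rank_def) is the dimension of this set.\<close>
definition edge_rows ::
  "((real, 'p::{finite,linorder}) vec, 'p) vec \<Rightarrow> (real, 'p) vec set" where
  "edge_rows T = {axis i 1 + axis j 1 | i j. i < j \<and> T $ i $ j \<noteq> 0}"

end

theory Submission
  imports Defs
begin

text \<open>Taking logarithms turns the equations \<open>\<Theta>\<^sub>i\<^sub>j \<beta>\<^sub>i \<beta>\<^sub>j = \<Theta>\<^sub>i\<^sub>j \<alpha>\<^sub>i \<alpha>\<^sub>j\<close> for the
  pairs with \<open>\<Theta>\<^sub>i\<^sub>j \<noteq> 0\<close> into the linear system \<open>A (log \<alpha> - log \<beta>) = 0\<close>. If \<open>A\<close> has
  rank \<open>p\<close>, its rows span \<open>\<real>\<^sup>p\<close>, so \<open>log \<alpha> - log \<beta>\<close> is orthogonal to itself and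
  hence zero.\<close>

lemma orthogonal_spanning_set_eq_0:
  assumes "span S = UNIV" and "\<And>y. y \<in> S \<Longrightarrow> orthogonal v y"
  shows "v = 0"
proof -
  have "orthogonal v v"
    using orthogonal_to_span[OF _ assms(2)] assms(1) by blast
  then show ?thesis
    by (simp add: orthogonal_self)
qed

definition ln_vec :: "real^'n \<Rightarrow> real^'n" where
  "ln_vec a = (\<chi> i. ln (a $ i))"

lemma inner_axis_add_ln_vec:
  assumes "0 < a $ i" and "0 < a $ j"
  shows "(axis i 1 + axis j 1) \<bullet> ln_vec a = ln (a $ i * a $ j)"
  using assms by (simp add: ln_vec_def inner_add_left inner_axis' ln_mult)

lemma ln_vec_inject:
  assumes "\<And>i. 0 < a $ i" and "\<And>i. 0 < b $ i" and "ln_vec a = ln_vec b"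
  shows "a = b"
proof -
  have "ln (a $ i) = ln (b $ i)" for i
    using assms(3) by (metis ln_vec_def vec_lambda_beta)
  then show ?thesis
    using assms(1,2) by (simp add: vec_eq_iff)
qed

lemma link_g_eq_imp_products_eq:
  assumes "link_g T b = link_g T a" and "i \<noteq> j" and "T $ i $ j \<noteq> 0"
  shows "b $ i * b $ j = a $ i * a $ j"
proof -
  have "T $ i $ j * (b $ i * b $ j) = T $ i $ j * (a $ i * a $ j)"
    using arg_cong[OF assms(1), of "\<lambda>M. M $ i $ j"] assms(2)
    by (simp add: link_g_def mult.assoc)
  then show ?thesis
    using assms(3) by simp
qed

lemma edge_products_determine_positive_vector:
  fixes a b :: "real^'p::{finite,linorder}"
  assumes span: "span (edge_rows T) = UNIV"
    and pos: "\<And>i. 0 < a $ i" "\<And>i. 0 < b $ i"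
    and products: "\<And>i j. i < j \<Longrightarrow> T $ i $ j \<noteq> 0 \<Longrightarrow> a $ i * a $ j = b $ i * b $ j"
  shows "a = b"
proof -
  have "orthogonal (ln_vec a - ln_vec b) y" if edge: "y \<in> edge_rows T" for y
  proof -
    obtain i j where y: "y = axis i 1 + axis j 1" and "i < j" "T $ i $ j \<noteq> 0"
      using edge unfolding edge_rows_def by blast
    then have "y \<bullet> ln_vec a = y \<bullet> ln_vec b"
      using products pos by (simp add: inner_axis_add_ln_vec)
    then show ?thesis
      by (metis orthogonal_def inner_commute inner_diff_right diff_self)
  qed
  then have "ln_vec a - ln_vec b = 0"
    using orthogonal_spanning_set_eq_0[OF span] by blast
  then show ?thesis
    using ln_vec_inject[OF pos] by simp
qed

theorem mainTheorem2:
  fixes \<Theta> :: "((real, 'p::{finite,linorder}) vec, 'p) vec"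
  assumes "CARD('p) \<ge> 2"
    and "correlation_matrix \<Theta>"
    and "dim (edge_rows \<Theta>) = CARD('p)"
  shows "\<forall>(\<alpha>::(real, 'p) vec) (\<beta>::(real, 'p) vec) (\<Theta>'::((real, 'p) vec, 'p) vec).
           (\<forall>i. 0 < \<alpha> $ i) \<and> (\<forall>i. 0 < \<beta> $ i) \<and> correlation_matrix \<Theta>' \<and>
           \<Theta>' = \<Theta> \<and> link_g \<Theta>' \<beta> = link_g \<Theta> \<alpha> \<longrightarrow> \<alpha> = \<beta>"
proof (intro allI impI)
  fix \<alpha> \<beta> :: "(real, 'p) vec" and \<Theta>' :: "((real, 'p) vec, 'p) vec"
  assume "(\<forall>i. 0 < \<alpha> $ i) \<and> (\<forall>i. 0 < \<beta> $ i) \<and> correlation_matrix \<Theta>' \<and>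
    \<Theta>' = \<Theta> \<and> link_g \<Theta>' \<beta> = link_g \<Theta> \<alpha>"
  then have pos: "\<And>i. 0 < \<alpha> $ i" "\<And>i. 0 < \<beta> $ i"
    and link: "link_g \<Theta> \<beta> = link_g \<Theta> \<alpha>"
    by auto
  have "span (edge_rows \<Theta>) = UNIV"
    using assms(3) dim_eq_full[of "edge_rows \<Theta>"] by simp
  moreover have "\<alpha> $ i * \<alpha> $ j = \<beta> $ i * \<beta> $ j" if "i < j" "\<Theta> $ i $ j \<noteq> 0" for i j
    using link_g_eq_imp_products_eq[OF link less_imp_neq] that by metis
  ultimately show "\<alpha> = \<beta>"
    using edge_products_determine_positive_vector pos by blast
qed

end
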